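(* For the games $\mathcal G$ and $\mathcal G^{\rm sm}$: (a) a GNE of $\mathcal G$ always exists; (b) a GNE of $\mathcal G^{\rm sm}$ exists provided $\mathcal P\neq\emptyset$; (c) if $\mathbf x^\star$ is a GNE of $\mathcal G$ satisfying constraint (C$_q$) for all $q=1,\dots,Q$, then $\mathbf x^\star$ is a GNE of $\mathcal G^{\rm sm}$; (d) if $\mathbf x^\star$ is a GNE of $\mathcal G^{\rm sm}$, then $\mathbf x^\star$ is a GNE of $\mathcal G$.
   Context: Fix integers $Q,J\ge1$, noise power $\sigma^2>0$, budgets $P_q>0$ ($q=1,\dots,Q$) and $P^{J}_j>0$ ($j=1,\dots,J$), and positive channel gains $H^{SD}_{qq},H^{SE}_{qe},H^{JD}_{jq},H^{JE}_{je}$. Variables: $p_q\ge0$ (power of source $q$) and $p^J_{jq}\ge0$ (power of jammer $j$ on the channel of user $q$); $\mathbf p^J_q=(p^J_{jq})_{j=1}^J$, $\mathbf x_q=(p_q,\mathbf p^J_q)$, $\mathbf x=(\mathbf x_q)_{q=1}^Q$, $\mathbf p^J_{-q}=(\mathbf p^J_r)_{r\ne q}$. Define $r_{qq}(\mathbf x_q)=\log\big(1+\frac{H^{SD}_{qq}p_q}{\sigma^2+\sum_jH^{JD}_{jq}p^J_{jq}}\big)$, $r_{qe}(\mathbf x_q)=\log\big(1+\frac{H^{SE}_{qe}p_q}{\sigma^2+\sum_jH^{JE}_{je}p^J_{jq}}\big)$, $\tilde r^s_q=r_{qq}-r_{qe}$, $r^s_q=\max(0,\tilde r^s_q)$. Constraint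 (C$_q$): $\sum_{j=1}^J(H^{SD}_{qq}H^{JE}_{je}-H^{SE}_{qe}H^{JD}_{jq})p^J_{jq}+(H^{SD}_{qq}-H^{SE}_{qe})\sigma^2\ge0$. $\mathcal P_q(\mathbf p^J_{-q})=\{\mathbf x_q\ge\mathbf 0: p_q\le P_q,\ \sum_{r=1}^Qp^J_{jr}\le P^J_j\ \forall j\}$ (with $p^J_{jr}$, $r\neq q$, fixed by $\mathbf p^J_{-q}$); $\mathcal P^{\rm sm}_q(\mathbf p^J_{-q})=\{\mathbf x_q\in\mathcal P_q(\mathbf p^J_{-q}):\text{(C}_q\text{) holds}\}$; $\mathcal P=\{\mathbf x\ge\mathbf 0: p_q\le P_q \text{ and (C}_q\text{) for all }q,\ \sum_{r}p^J_{jr}\le P^J_j\ \forall j\}$. Game $\mathcal G$: player $q$ maximizes $r^s_q(\mathbf x_q)$ over $\mathbf x_q\in\mathcal P_q(\mathbf p^J_{-q})$; game $\mathcal G^{\rm sm}$: player $q$ maximizes $\tilde r^s_q(\mathbf x_q)$ over $\mathcal P^{\rm sm}_q(\mathbf p^J_{-q})$. A GNE of $\mathcal G$ is $\mathbf x^\star$ such that for all $q$: $\mathbf x^\star_q\in\mathcal P_q(\mathbf p^{J\star}_{-q})$ and $r^s_q(\mathbf x^\star_q)\ge r^s_q(\mathbf x_q)$ for all $\mathbf x_q\in\mathcal P_q(\mathbf p^{J\star}_{-q})$. A GNE of $\mathcal G^{\rm sm}$ is defined analogously with $\tilde r^s_q$ and $\mathcal P^{\rm sm}_q$. *)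

theory Defs
  imports Complex_Main
begin

text \<open>Users q range over 0..<nQ, jammers j over 0..<nJ
 (0-based renaming of 1..Q, 1..J). HSE q stands for H^SE_{qe}, HJE j for H^JE_{je}
 (single eavesdropper e), HSD q for H^SD_{qq}, HJD j q for H^JD_{jq}.\<close>
record params =
  nQ :: nat
  nJ :: nat
  sig2 :: real
  Pmax :: "nat \<Rightarrow> real"
  PJmax :: "nat \<Rightarrow> real"
  HSD :: "nat \<Rightarrow> real"
  HSE :: "nat \<Rightarrow> real"
  HJD :: "nat \<Rightarrow> nat \<Rightarrow> real"
  HJE :: "nat \<Rightarrow> real"

text \<open>A strategy of player q: (p_q, j \<mapsto> p^J_{jq}).
 A profile: (q \<mapsto> p_q, j q \<mapsto> p^J_{jq}).\<close>
type_synonym strat = "real \<times> (nat \<Rightarrow> real)"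
type_synonym profile = "(nat \<Rightarrow> real) \<times> (nat \<Rightarrow> nat \<Rightarrow> real)"

definition strat_of :: "profile \<Rightarrow> nat \<Rightarrow> strat" where
  "strat_of x q = (fst x q, \<lambda>j. snd x j q)"

definition r_qq :: "params \<Rightarrow> nat \<Rightarrow> strat \<Rightarrow> real" where
  "r_qq s q xq = ln (1 + HSD s q * fst xq /
      (sig2 s + (\<Sum>j<nJ s. HJD s j q * snd xq j)))"

definition r_qe :: "params \<Rightarrow> nat \<Rightarrow> strat \<Rightarrow> real" where
  "r_qe s q xq = ln (1 + HSE s q * fst xq /
      (sig2 s + (\<Sum>j<nJ s. HJE s j * snd xq j)))"

definition rs_tilde :: "params \<Rightarrow> nat \<Rightarrow> strat \<Rightarrow> real" where
  "rs_tilde s q xq = r_qq s q xq - r_qe s q xq"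

definition rs :: "params \<Rightarrow> nat \<Rightarrow> strat \<Rightarrow> real" where
  "rs s q xq = max 0 (rs_tilde s q xq)"

definition Cq :: "params \<Rightarrow> nat \<Rightarrow> strat \<Rightarrow> bool" where
  "Cq s q xq \<longleftrightarrow>
     (\<Sum>j<nJ s. (HSD s q * HJE s j - HSE s q * HJD s j q) * snd xq j)
       + (HSD s q - HSE s q) * sig2 s \<ge> 0"

definition Pq :: "params \<Rightarrow> nat \<Rightarrow> (nat \<Rightarrow> nat \<Rightarrow> real) \<Rightarrow> strat \<Rightarrow> bool" where
  "Pq s q pJ xq \<longleftrightarrow>
     0 \<le> fst xq \<and> fst xq \<le> Pmax s q \<and>
     (\<forall>j<nJ s. 0 \<le> snd xq j \<and>
        snd xq j + (\<Sum>r\<in>{..<nQ s} - {q}. pJ j r) \<le> PJmax s j)"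

definition Pq_sm :: "params \<Rightarrow> nat \<Rightarrow> (nat \<Rightarrow> nat \<Rightarrow> real) \<Rightarrow> strat \<Rightarrow> bool" where
  "Pq_sm s q pJ xq \<longleftrightarrow> Pq s q pJ xq \<and> Cq s q xq"

definition Pset :: "params \<Rightarrow> profile set" where
  "Pset s = {x. (\<forall>q<nQ s. 0 \<le> fst x q \<and> fst x q \<le> Pmax s q \<and> Cq s q (strat_of x q)
                       \<and> (\<forall>j<nJ s. 0 \<le> snd x j q)) \<and>
               (\<forall>j<nJ s. (\<Sum>r<nQ s. snd x j r) \<le> PJmax s j)}"

definition GNE :: "params \<Rightarrow> profile \<Rightarrow> bool" where
  "GNE s x \<longleftrightarrow> (\<forall>q<nQ s. Pq s q (snd x) (strat_of x q) \<and>
      (\<forall>xq. Pq s q (snd x) xq \<longrightarrow> rs s q xq \<le> rs s q (strat_of x q)))"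

definition GNE_sm :: "params \<Rightarrow> profile \<Rightarrow> bool" where
  "GNE_sm s x \<longleftrightarrow> (\<forall>q<nQ s. Pq_sm s q (snd x) (strat_of x q) \<and>
      (\<forall>xq. Pq_sm s q (snd x) xq \<longrightarrow> rs_tilde s q xq \<le> rs_tilde s q (strat_of x q)))"

definition valid_params :: "params \<Rightarrow> bool" where
  "valid_params s \<longleftrightarrow> nQ s \<ge> 1 \<and> nJ s \<ge> 1 \<and> sig2 s > 0 \<and>
     (\<forall>q<nQ s. Pmax s q > 0 \<and> HSD s q > 0 \<and> HSE s q > 0) \<and>
     (\<forall>j<nJ s. PJmax s j > 0 \<and> HJE s j > 0 \<and> (\<forall>q<nQ s. HJD s j q > 0))"

end

theory Submission
  imports Defs "HOL-Analysis.Analysis"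
begin

text \<open>Each player's utility depends only on its own strategy, and the players interact only
  through the shared jammer budgets (the constraints (C_q) are individual). Hence the sum of the
  utilities is an exact potential, and a maximizer of it over the compact shared feasible set,
  which exists by continuity, is a GNE. Constraint (C_q) says precisely that the legitimate link's
  gain-to-noise ratio dominates the eavesdropper's, so under (C_q) the rate difference is
  nonnegative, and a positive rate difference forces (C_q). Thus \<open>rs\<close> and \<open>rs_tilde\<close> have the
  same best responses, which gives (c) and (d).\<close>

section \<open>The secrecy rate and constraint (C_q)\<close>

definition dest_noise :: "params \<Rightarrow> nat \<Rightarrow> strat \<Rightarrow> real" where
  "dest_noise s q xq = sig2 s + (\<Sum>j<nJ s. HJD s j q * snd xq j)"

definition eve_noise :: "params \<Rightarrow> nat \<Rightarrow> strat \<Rightarrow> real" where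
  "eve_noise s q xq = sig2 s + (\<Sum>j<nJ s. HJE s j * snd xq j)"

lemma rs_tilde_eq:
  "rs_tilde s q xq =
     ln (1 + HSD s q * fst xq / dest_noise s q xq) - ln (1 + HSE s q * fst xq / eve_noise s q xq)"
  by (simp add: rs_tilde_def r_qq_def r_qe_def dest_noise_def eve_noise_def)

lemma Cq_iff_noise_le: "Cq s q xq \<longleftrightarrow> HSE s q * dest_noise s q xq \<le> HSD s q * eve_noise s q xq"
proof -
  have "(\<Sum>j<nJ s. (HSD s q * HJE s j - HSE s q * HJD s j q) * snd xq j)
          + (HSD s q - HSE s q) * sig2 s
        = HSD s q * eve_noise s q xq - HSE s q * dest_noise s q xq"
    by (simp add: dest_noise_def eve_noise_def algebra_simps sum_subtractf sum_distrib_left)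
  then show ?thesis
    unfolding Cq_def by linarith
qed

lemma noise_pos:
  assumes "valid_params s" "q < nQ s" "\<forall>j<nJ s. 0 \<le> snd xq j"
  shows "0 < dest_noise s q xq" "0 < eve_noise s q xq"
proof -
  have "0 \<le> (\<Sum>j<nJ s. HJD s j q * snd xq j)" "0 \<le> (\<Sum>j<nJ s. HJE s j * snd xq j)"
    using assms by (auto intro!: sum_nonneg simp: valid_params_def less_imp_le)
  then show "0 < dest_noise s q xq" "0 < eve_noise s q xq"
    using assms(1) by (auto simp: dest_noise_def eve_noise_def valid_params_def)
qed

lemma ln_one_plus_ratio_le:
  fixes a b d e p :: real
  assumes "0 < d" "0 < e" "0 \<le> a" "0 \<le> b" "0 \<le> p" "b * d \<le> a * e"
  shows "ln (1 + b * p / e) \<le> ln (1 + a * p / d)"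
proof -
  have "b / e \<le> a / d"
    using assms by (simp add: field_simps)
  then have "b / e * p \<le> a / d * p"
    using \<open>0 \<le> p\<close> by (rule mult_right_mono)
  then have "b * p / e \<le> a * p / d"
    by simp
  moreover have "0 < 1 + b * p / e"
    using assms by (simp add: add_pos_nonneg)
  ultimately show ?thesis
    by simp
qed

definition nonneg_strat :: "params \<Rightarrow> strat \<Rightarrow> bool" where
  "nonneg_strat s xq \<longleftrightarrow> 0 \<le> fst xq \<and> (\<forall>j<nJ s. 0 \<le> snd xq j)"

lemma Pq_imp_nonneg_strat: "Pq s q pJ xq \<Longrightarrow> nonneg_strat s xq"
  by (simp add: Pq_def nonneg_strat_def)

lemma rs_tilde_nonneg_if_Cq:
  assumes "valid_params s" "q < nQ s" "nonneg_strat s xq" "Cq s q xq"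
  shows "0 \<le> rs_tilde s q xq"
  using assms noise_pos[OF assms(1,2)]
    ln_one_plus_ratio_le[of "dest_noise s q xq" "eve_noise s q xq" "HSD s q" "HSE s q" "fst xq"]
  by (auto simp: rs_tilde_eq Cq_iff_noise_le nonneg_strat_def valid_params_def less_imp_le)

lemma Cq_if_rs_tilde_pos:
  assumes "valid_params s" "q < nQ s" "nonneg_strat s xq" "0 < rs_tilde s q xq"
  shows "Cq s q xq"
proof (rule ccontr)
  assume "\<not> Cq s q xq"
  then have "HSD s q * eve_noise s q xq \<le> HSE s q * dest_noise s q xq"
    by (simp add: Cq_iff_noise_le)
  then have "rs_tilde s q xq \<le> 0"
    using assms noise_pos[OF assms(1,2)]
      ln_one_plus_ratio_le[of "eve_noise s q xq" "dest_noise s q xq" "HSE s q" "HSD s q" "fst xq"]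
    by (auto simp: rs_tilde_eq nonneg_strat_def valid_params_def less_imp_le mult.commute)
  then show False
    using assms(4) by simp
qed

lemma utilities_cong:
  assumes "fst a = fst b" "\<forall>j<nJ s. snd a j = snd b j"
  shows "rs_tilde s q a = rs_tilde s q b" "rs s q a = rs s q b" "Cq s q a = Cq s q b"
proof -
  have "(\<Sum>j<nJ s. f j * snd a j) = (\<Sum>j<nJ s. f j * snd b j)" for f
    using assms(2) by (intro sum.cong) auto
  then show "rs_tilde s q a = rs_tilde s q b" "rs s q a = rs s q b" "Cq s q a = Cq s q b"
    by (simp_all add: rs_tilde_def r_qq_def r_qe_def rs_def Cq_def assms(1))
qed

section \<open>Unilateral deviations and the shared feasible set\<close>

definition deviate :: "params \<Rightarrow> profile \<Rightarrow> nat \<Rightarrow> strat \<Rightarrow> profile" where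
  "deviate s x q xq =
     ((fst x)(q := fst xq), \<lambda>j. if j < nJ s then (snd x j)(q := snd xq j) else snd x j)"

lemma fst_deviate: "fst (deviate s x q xq) = (fst x)(q := fst xq)"
  by (simp add: deviate_def)

lemma snd_deviate:
  "snd (deviate s x q xq) j = (if j < nJ s then (snd x j)(q := snd xq j) else snd x j)"
  by (simp add: deviate_def)

lemma strat_of_deviate_other: "r \<noteq> q \<Longrightarrow> strat_of (deviate s x q xq) r = strat_of x r"
  by (auto simp: strat_of_def deviate_def fun_eq_iff)

lemma utilities_deviate_self:
  "rs_tilde s q (strat_of (deviate s x q xq) q) = rs_tilde s q xq"
  "rs s q (strat_of (deviate s x q xq) q) = rs s q xq"
  "Cq s q (strat_of (deviate s x q xq) q) = Cq s q xq"
  by (rule utilities_cong; simp add: strat_of_def deviate_def)+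

text \<open>Entries outside the index ranges are pinned to 0, so that the box is compact in the
  product topology on profiles.\<close>
definition power_box :: "params \<Rightarrow> profile set" where
  "power_box s =
     PiE UNIV (\<lambda>q. if q < nQ s then {0..Pmax s q} else {0}) \<times>
     PiE UNIV (\<lambda>j. PiE UNIV (\<lambda>q. if j < nJ s \<and> q < nQ s then {0..PJmax s j} else {0}))"

definition jammer_budget :: "params \<Rightarrow> profile set" where
  "jammer_budget s = {x. \<forall>j<nJ s. (\<Sum>r<nQ s. snd x j r) \<le> PJmax s j}"

definition secrecy_constrained :: "params \<Rightarrow> profile set" where
  "secrecy_constrained s = {x. \<forall>q<nQ s. Cq s q (strat_of x q)}"

lemma mem_power_box:
  "x \<in> power_box s \<longleftrightarrow>
     (\<forall>q. if q < nQ s then 0 \<le> fst x q \<and> fst x q \<le> Pmax s q else fst x q = 0) \<and>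
     (\<forall>j q. if j < nJ s \<and> q < nQ s then 0 \<le> snd x j q \<and> snd x j q \<le> PJmax s j
            else snd x j q = 0)"
  by (cases x) (simp add: power_box_def PiE_iff if_split_mem2)

lemma compact_PiE_UNIV:
  assumes "\<And>i. compact (S i :: 'b::topological_space set)"
  shows "compact (PiE UNIV S)"
proof -
  have "compactin (product_topology (\<lambda>i. euclidean) UNIV) (PiE UNIV S)"
    using assms by (simp add: compactin_PiE)
  then show ?thesis
    by (simp add: euclidean_product_topology)
qed

lemma compact_power_box: "compact (power_box s)"
  unfolding power_box_def by (simp add: compact_Times compact_PiE_UNIV)

lemma continuous_on_fst_coordinate: "continuous_on S (\<lambda>x::profile. fst x q)"
  by (rule continuous_on_product_then_coordinatewise) (intro continuous_intros)

lemma continuous_on_snd_coordinate: "continuous_on S (\<lambda>x::profile. snd x j q)"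
  by (rule continuous_on_product_then_coordinatewise, rule continuous_on_product_then_coordinatewise)
    (intro continuous_intros)

lemma open_Collect_const: "open {x. P}"
  by (cases P) auto

lemma closed_jammer_budget: "closed (jammer_budget s)"
  unfolding jammer_budget_def
  by (intro closed_Collect_all closed_Collect_imp open_Collect_const closed_Collect_le
      continuous_on_sum continuous_on_add continuous_on_mult continuous_on_const
      continuous_on_snd_coordinate)

lemma closed_secrecy_constrained: "closed (secrecy_constrained s)"
  unfolding secrecy_constrained_def Cq_def strat_of_def snd_conv
  by (intro closed_Collect_all closed_Collect_imp open_Collect_const closed_Collect_le
      continuous_on_sum continuous_on_add continuous_on_mult continuous_on_const
      continuous_on_snd_coordinate)

lemma continuous_on_ln_one_plus_ratio:
  fixes f g :: "'a::topological_space \<Rightarrow> real"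
  assumes "continuous_on K f" "continuous_on K g" "0 \<le> h"
    and "\<And>x. x \<in> K \<Longrightarrow> 0 \<le> f x" "\<And>x. x \<in> K \<Longrightarrow> 0 < g x"
  shows "continuous_on K (\<lambda>x. ln (1 + h * f x / g x))"
proof (intro continuous_on_ln continuous_on_add continuous_on_divide continuous_on_mult
    continuous_on_const assms(1,2) ballI)
  fix x assume "x \<in> K"
  then have "0 \<le> h * f x / g x"
    using assms(3-5) by (simp add: less_imp_le)
  then show "1 + h * f x / g x \<noteq> 0" and "g x \<noteq> 0"
    using assms(5)[OF \<open>x \<in> K\<close>] by linarith+
qed

lemma continuous_on_rs_tilde:
  assumes "valid_params s" "q < nQ s" "K \<subseteq> power_box s"
  shows "continuous_on K (\<lambda>x. rs_tilde s q (strat_of x q))"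
proof -
  have nonneg: "0 \<le> fst x q" "\<forall>j<nJ s. 0 \<le> snd x j q" if "x \<in> K" for x
    using that assms(2,3) unfolding subset_iff mem_power_box by (metis (full_types))+
  have "continuous_on K (\<lambda>x. dest_noise s q (strat_of x q))"
    "continuous_on K (\<lambda>x. eve_noise s q (strat_of x q))"
    unfolding dest_noise_def eve_noise_def strat_of_def snd_conv
    by (intro continuous_on_add continuous_on_sum continuous_on_mult continuous_on_const
        continuous_on_snd_coordinate)+
  moreover have "0 < dest_noise s q (strat_of x q)" "0 < eve_noise s q (strat_of x q)"
    if "x \<in> K" for x
    using noise_pos[OF assms(1,2)] nonneg(2)[OF that] by (simp_all add: strat_of_def)
  moreover have "0 \<le> HSD s q" "0 \<le> HSE s q"
    using assms(1,2) by (auto simp: valid_params_def less_imp_le)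
  ultimately show ?thesis
    unfolding rs_tilde_eq
    by (intro continuous_on_diff continuous_on_ln_one_plus_ratio)
      (simp_all add: strat_of_def continuous_on_fst_coordinate nonneg(1))
qed

lemma sum_fun_upd_remove:
  assumes "finite A" "a \<in> A"
  shows "sum (f(a := v)) A = v + sum f (A - {a})"
proof -
  have "sum (f(a := v)) (A - {a}) = sum f (A - {a})"
    by (intro sum.cong) auto
  then show ?thesis
    using sum.remove[OF assms, of "f(a := v)"] by simp
qed

lemma sum_split_own_jammer_power:
  "q < nQ s \<Longrightarrow> (\<Sum>r<nQ s. pJ j r) = pJ j q + (\<Sum>r\<in>{..<nQ s} - {q}. pJ j r)"
  by (simp add: sum.remove)

lemma Pq_strat_of:
  assumes "x \<in> power_box s" "x \<in> jammer_budget s" "q < nQ s"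
  shows "Pq s q (snd x) (strat_of x q)"
proof -
  have "snd x j q + (\<Sum>r\<in>{..<nQ s} - {q}. snd x j r) \<le> PJmax s j" if "j < nJ s" for j
    using assms(2) that
    unfolding jammer_budget_def sum_split_own_jammer_power[OF assms(3)] by blast
  then show ?thesis
    using assms(1,3) unfolding mem_power_box Pq_def strat_of_def by auto
qed

lemma deviate_feasible:
  assumes "x \<in> power_box s" "x \<in> jammer_budget s" "q < nQ s" "Pq s q (snd x) xq"
  shows "deviate s x q xq \<in> power_box s \<inter> jammer_budget s"
proof
  have own: "0 \<le> fst xq" "fst xq \<le> Pmax s q"
    "\<And>j. j < nJ s \<Longrightarrow> 0 \<le> snd xq j \<and> snd xq j + (\<Sum>r\<in>{..<nQ s} - {q}. snd x j r) \<le> PJmax s j"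
    using assms(4) by (auto simp: Pq_def)
  have others_nonneg: "0 \<le> (\<Sum>r\<in>{..<nQ s} - {q}. snd x j r)" if "j < nJ s" for j
    using assms(1) that unfolding mem_power_box by (intro sum_nonneg) (metis DiffD1 lessThan_iff)
  show "deviate s x q xq \<in> power_box s"
    unfolding mem_power_box fst_deviate snd_deviate
  proof (intro conjI allI)
    fix q' show "if q' < nQ s then 0 \<le> ((fst x)(q := fst xq)) q' \<and> ((fst x)(q := fst xq)) q' \<le> Pmax s q'
                 else ((fst x)(q := fst xq)) q' = 0"
      using assms(1,3) own(1,2) unfolding mem_power_box by (cases "q' = q") simp_all
  next
    fix j q'
    have "snd xq j \<le> PJmax s j" if "j < nJ s"
      using own(3)[OF that] others_nonneg[OF that] by linarith
    then show "if j < nJ s \<and> q' < nQ s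
        then 0 \<le> (if j < nJ s then (snd x j)(q := snd xq j) else snd x j) q' \<and>
             (if j < nJ s then (snd x j)(q := snd xq j) else snd x j) q' \<le> PJmax s j
        else (if j < nJ s then (snd x j)(q := snd xq j) else snd x j) q' = 0"
      using assms(1,3) own(3) unfolding mem_power_box by (cases "q' = q") simp_all
  qed
  show "deviate s x q xq \<in> jammer_budget s"
    unfolding jammer_budget_def mem_Collect_eq snd_deviate
  proof (intro allI impI)
    fix j assume "j < nJ s"
    have "(\<Sum>r<nQ s. ((snd x j)(q := snd xq j)) r)
          = snd xq j + (\<Sum>r\<in>{..<nQ s} - {q}. snd x j r)"
      using assms(3) by (simp only: sum_fun_upd_remove finite_lessThan lessThan_iff)
    then show "(\<Sum>r<nQ s. (if j < nJ s then (snd x j)(q := snd xq j) else snd x j) r) \<le> PJmax s j"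
      using own(3)[OF \<open>j < nJ s\<close>] \<open>j < nJ s\<close> by simp
  qed
qed

lemma deviate_secrecy_constrained:
  assumes "x \<in> secrecy_constrained s" "Cq s q xq"
  shows "deviate s x q xq \<in> secrecy_constrained s"
  unfolding secrecy_constrained_def
proof (intro CollectI allI impI)
  fix r assume "r < nQ s"
  then show "Cq s r (strat_of (deviate s x q xq) r)"
    using assms by (cases "r = q")
      (simp_all add: utilities_deviate_self strat_of_deviate_other secrecy_constrained_def)
qed

definition truncate_profile :: "params \<Rightarrow> profile \<Rightarrow> profile" where
  "truncate_profile s z =
     (\<lambda>q. if q < nQ s then fst z q else 0, \<lambda>j q. if j < nJ s \<and> q < nQ s then snd z j q else 0)"

lemma truncate_profile_feasible:
  assumes "z \<in> Pset s"
  shows "truncate_profile s z \<in> power_box s \<inter> jammer_budget s \<inter> secrecy_constrained s"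
proof (intro IntI)
  have z: "\<And>q. q < nQ s \<Longrightarrow> 0 \<le> fst z q \<and> fst z q \<le> Pmax s q \<and> Cq s q (strat_of z q)
              \<and> (\<forall>j<nJ s. 0 \<le> snd z j q)"
    "\<And>j. j < nJ s \<Longrightarrow> (\<Sum>r<nQ s. snd z j r) \<le> PJmax s j"
    using assms by (auto simp: Pset_def)
  have "snd z j q \<le> PJmax s j" if "j < nJ s" "q < nQ s" for j q
    using member_le_sum[of q "{..<nQ s}" "snd z j"] z that by fastforce
  then show "truncate_profile s z \<in> power_box s"
    using z(1) by (simp add: mem_power_box truncate_profile_def)
  show "truncate_profile s z \<in> jammer_budget s"
    using z(2) by (simp add: jammer_budget_def truncate_profile_def)
  have "Cq s q (strat_of (truncate_profile s z) q)" if "q < nQ s" for q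
    using z(1)[OF that] utilities_cong(3)[of "strat_of (truncate_profile s z) q" "strat_of z q" s q]
    by (simp add: strat_of_def truncate_profile_def that)
  then show "truncate_profile s z \<in> secrecy_constrained s"
    by (simp add: secrecy_constrained_def)
qed

section \<open>Existence of equilibria and comparison of the two games\<close>

lemma sum_le_at_single_difference:
  fixes f g :: "'a \<Rightarrow> real"
  assumes "finite I" "q \<in> I" "sum f I \<le> sum g I" "\<And>r. r \<in> I - {q} \<Longrightarrow> f r = g r"
  shows "f q \<le> g q"
proof -
  have "sum f (I - {q}) = sum g (I - {q})"
    using assms(4) by (rule sum.cong[OF refl])
  then show ?thesis
    using assms(3) sum.remove[OF assms(1,2), of f] sum.remove[OF assms(1,2), of g] by linarith
qed

lemma potential_maximizer_best_response:
  fixes U :: "nat \<Rightarrow> strat \<Rightarrow> real"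
  assumes "\<forall>y\<in>K. (\<Sum>r<nQ s. U r (strat_of y r)) \<le> (\<Sum>r<nQ s. U r (strat_of x r))"
    and "q < nQ s" "deviate s x q xq \<in> K"
  shows "U q (strat_of (deviate s x q xq) q) \<le> U q (strat_of x q)"
proof (rule sum_le_at_single_difference[where I = "{..<nQ s}"
      and f = "\<lambda>r. U r (strat_of (deviate s x q xq) r)" and g = "\<lambda>r. U r (strat_of x r)"])
  show "(\<Sum>r<nQ s. U r (strat_of (deviate s x q xq) r)) \<le> (\<Sum>r<nQ s. U r (strat_of x r))"
    using assms(1,3) by blast
  show "\<And>r. r \<in> {..<nQ s} - {q} \<Longrightarrow>
      U r (strat_of (deviate s x q xq) r) = U r (strat_of x r)"
    by (simp add: strat_of_deviate_other)
qed (use assms(2) in simp_all)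

lemma GNE_exists:
  assumes "valid_params s"
  shows "\<exists>x. GNE s x"
proof -
  let ?K = "power_box s \<inter> jammer_budget s"
  have "((\<lambda>q. 0), (\<lambda>j q. 0)) \<in> ?K"
    using assms by (auto simp: mem_power_box jammer_budget_def valid_params_def less_imp_le)
  moreover have "compact ?K"
    by (intro compact_Int_closed compact_power_box closed_jammer_budget)
  moreover have "continuous_on ?K (\<lambda>x. \<Sum>r<nQ s. rs s r (strat_of x r))"
    unfolding rs_def
    by (intro continuous_on_sum continuous_on_max continuous_on_const continuous_on_rs_tilde[OF assms])
      auto
  ultimately obtain x where x: "x \<in> ?K"
    and max: "\<forall>y\<in>?K. (\<Sum>r<nQ s. rs s r (strat_of y r)) \<le> (\<Sum>r<nQ s. rs s r (strat_of x r))"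
    using continuous_attains_sup[of ?K] by blast
  have "GNE s x"
    unfolding GNE_def
  proof (intro allI impI conjI)
    fix q xq assume q: "q < nQ s" and "Pq s q (snd x) xq"
    then have "deviate s x q xq \<in> ?K"
      using deviate_feasible x by blast
    then show "rs s q xq \<le> rs s q (strat_of x q)"
      using potential_maximizer_best_response[OF max q] by (simp add: utilities_deviate_self)
  qed (use x Pq_strat_of in blast)
  then show ?thesis ..
qed

lemma GNE_sm_exists:
  assumes "valid_params s" "Pset s \<noteq> {}"
  shows "\<exists>x. GNE_sm s x"
proof -
  let ?K = "power_box s \<inter> jammer_budget s \<inter> secrecy_constrained s"
  have "?K \<noteq> {}"
    using assms(2) truncate_profile_feasible by blast
  moreover have "compact ?K"
    by (intro compact_Int_closed compact_power_box closed_jammer_budget closed_secrecy_constrained)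
  moreover have "continuous_on ?K (\<lambda>x. \<Sum>r<nQ s. rs_tilde s r (strat_of x r))"
    by (intro continuous_on_sum continuous_on_rs_tilde[OF assms(1)]) auto
  ultimately obtain x where x: "x \<in> ?K"
    and max: "\<forall>y\<in>?K. (\<Sum>r<nQ s. rs_tilde s r (strat_of y r))
                     \<le> (\<Sum>r<nQ s. rs_tilde s r (strat_of x r))"
    using continuous_attains_sup[of ?K] by blast
  have "GNE_sm s x"
    unfolding GNE_sm_def
  proof (intro allI impI conjI)
    fix q xq assume q: "q < nQ s" and "Pq_sm s q (snd x) xq"
    then have "deviate s x q xq \<in> ?K"
      using deviate_feasible deviate_secrecy_constrained x by (simp add: Pq_sm_def)
    then show "rs_tilde s q xq \<le> rs_tilde s q (strat_of x q)"
      using potential_maximizer_best_response[OF max q] by (simp add: utilities_deviate_self)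
  next
    fix q assume "q < nQ s"
    then show "Pq_sm s q (snd x) (strat_of x q)"
      using x Pq_strat_of by (simp add: Pq_sm_def secrecy_constrained_def)
  qed
  then show ?thesis ..
qed

lemma GNE_sm_if_GNE_secrecy_constrained:
  assumes "valid_params s" "GNE s x" "x \<in> secrecy_constrained s"
  shows "GNE_sm s x"
  unfolding GNE_sm_def
proof (intro allI impI conjI)
  fix q assume q: "q < nQ s"
  have own: "Pq s q (snd x) (strat_of x q)" "Cq s q (strat_of x q)"
    using assms(2,3) q by (auto simp: GNE_def secrecy_constrained_def)
  then show "Pq_sm s q (snd x) (strat_of x q)"
    by (simp add: Pq_sm_def)
  fix xq assume "Pq_sm s q (snd x) xq"
  then have xq: "Pq s q (snd x) xq" "Cq s q xq"
    by (simp_all add: Pq_sm_def)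
  have "0 \<le> rs_tilde s q xq"
    using rs_tilde_nonneg_if_Cq[OF assms(1) q Pq_imp_nonneg_strat[OF xq(1)] xq(2)] .
  moreover have "rs s q xq \<le> rs s q (strat_of x q)"
    using assms(2) q xq(1) unfolding GNE_def by blast
  moreover have "0 \<le> rs_tilde s q (strat_of x q)"
    using rs_tilde_nonneg_if_Cq[OF assms(1) q Pq_imp_nonneg_strat[OF own(1)] own(2)] .
  ultimately show "rs_tilde s q xq \<le> rs_tilde s q (strat_of x q)"
    by (simp add: rs_def)
qed

lemma GNE_if_GNE_sm:
  assumes "valid_params s" "GNE_sm s x"
  shows "GNE s x"
  unfolding GNE_def
proof (intro allI impI conjI)
  fix q assume q: "q < nQ s"
  have opt: "\<And>xq. Pq_sm s q (snd x) xq \<Longrightarrow> rs_tilde s q xq \<le> rs_tilde s q (strat_of x q)"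
    using assms(2) q unfolding GNE_sm_def by blast
  show "Pq s q (snd x) (strat_of x q)"
    using assms(2) q by (simp add: GNE_sm_def Pq_sm_def)
  fix xq assume xq: "Pq s q (snd x) xq"
  show "rs s q xq \<le> rs s q (strat_of x q)"
  proof (cases "0 < rs_tilde s q xq")
    case True
    then have "Cq s q xq"
      using Cq_if_rs_tilde_pos[OF assms(1) q Pq_imp_nonneg_strat[OF xq]] by blast
    then have "rs_tilde s q xq \<le> rs_tilde s q (strat_of x q)"
      using opt xq by (simp add: Pq_sm_def)
    then show ?thesis
      by (simp add: rs_def)
  qed (simp add: rs_def)
qed

theorem proposition1:
  fixes s :: params
  assumes "valid_params s"
  shows "(\<exists>x. GNE s x)
       \<and> (Pset s \<noteq> {} \<longrightarrow> (\<exists>x. GNE_sm s x))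
       \<and> (\<forall>x. GNE s x \<and> (\<forall>q<nQ s. Cq s q (strat_of x q)) \<longrightarrow> GNE_sm s x)
       \<and> (\<forall>x. GNE_sm s x \<longrightarrow> GNE s x)"
  using GNE_exists[OF assms] GNE_sm_exists[OF assms] GNE_if_GNE_sm[OF assms]
    GNE_sm_if_GNE_secrecy_constrained[OF assms]
  by (auto simp: secrecy_constrained_def)

end
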